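(* For every weak composition $a$ of length $n$, \[\mathfrak{F}_a=\sum_{\substack{b\ge a\\ \mathrm{flat}(b)=\mathrm{flat}(a)}}\mathfrak{L}_b,\] where $b$ ranges over weak compositions of length $n$.
   Context: Weak composition of length $n$: sequence of $n$ nonnegative integers; $\mathrm{flat}(a)$ deletes zero parts; $b\ge a$ means $b_1+\cdots+b_i\ge a_1+\cdots+a_i$ for all $i$. $\mathfrak{F}_a=\sum x^c$ over weak compositions $c$ of length $n$ with $c\ge a$ and $\mathrm{flat}(c)$ refining $\mathrm{flat}(a)$ (i.e. $\mathrm{flat}(a)$ is obtained by summing consecutive parts of $\mathrm{flat}(c)$). A local move replaces consecutive entries $(0,k)$ at positions $p,p+1$ by $(i,j)$ with $i+j=k$, $i,j\ge0$; a fixed slide of $b$ is obtained from $b$ by a (possibly empty) sequence of local moves with $j>0$ required whenever $b_{p+1}\ne0$. $\mathfrak{L}_b=\sum x^c$ over the set of fixed slides $c$ of $b$. *)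

theory Defs
  imports Main "HOL-Library.Function_Algebras"
begin

(* A polynomial with integer coefficients in x_1..x_n is represented by its
   coefficient function on exponent vectors (nat list => int); x^c is the
   indicator of c, a sum \<Sum> x^c over a set S of exponents is the indicator of S,
   and sums of polynomials are pointwise sums. *)

definition flat :: "nat list \<Rightarrow> nat list" where
  "flat a = filter (\<lambda>x. x \<noteq> 0) a"

definition dominates :: "nat list \<Rightarrow> nat list \<Rightarrow> bool" where
  "dominates b a \<longleftrightarrow> (\<forall>i. sum_list (take i b) \<ge> sum_list (take i a))"

definition refines :: "nat list \<Rightarrow> nat list \<Rightarrow> bool" where
  "refines beta alpha \<longleftrightarrow>
     (\<exists>ls. concat ls = beta \<and> (\<forall>l\<in>set ls. l \<noteq> []) \<and> map sum_list ls = alpha)"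

definition monomial_sum :: "nat list set \<Rightarrow> (nat list \<Rightarrow> int)" where
  "monomial_sum S = (\<lambda>c. if c \<in> S then 1 else 0)"

definition fund_slide_set :: "nat list \<Rightarrow> nat list set" where
  "fund_slide_set a = {c. length c = length a \<and> dominates c a \<and> refines (flat c) (flat a)}"

definition fund_slide :: "nat list \<Rightarrow> (nat list \<Rightarrow> int)" where
  "fund_slide a = monomial_sum (fund_slide_set a)"

definition local_move :: "nat list \<Rightarrow> nat list \<Rightarrow> nat list \<Rightarrow> bool" where
  "local_move b c c' \<longleftrightarrow>
     (\<exists>p i j. Suc p < length c \<and> c ! p = 0 \<and> i + j = c ! Suc p \<and>
        (b ! Suc p \<noteq> 0 \<longrightarrow> j > 0) \<and>
        c' = c[p := i, Suc p := j])"

definition fixed_slides :: "nat list \<Rightarrow> nat list set" where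
  "fixed_slides b = {c. (local_move b)\<^sup>*\<^sup>* b c}"

definition lock :: "nat list \<Rightarrow> (nat list \<Rightarrow> int)" where
  "lock b = monomial_sum (fixed_slides b)"

end

theory Submission
  imports Defs
begin

text \<open>
  Encode a weak composition by the set of its partial sums.  Then \<open>flat x\<close> is determined
  by the partial-sum set of \<open>x\<close>, refinement of flattenings is inclusion of partial-sum sets,
  and the fixed slides of \<open>b\<close> are exactly the \<open>c\<close> dominating \<open>b\<close> whose partial sums agree
  with those of \<open>b\<close> right after each nonzero entry of \<open>b\<close>, that entry staying nonzero.
  So every \<open>c\<close> in the support of \<open>F_a\<close> is a fixed slide of exactly one \<open>b \<ge> a\<close> with
  \<open>flat b = flat a\<close>, namely the one whose partial sums are those of \<open>c\<close> rounded down to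
  partial sums of \<open>a\<close>; and every fixed slide of such a \<open>b\<close> lies in the support of \<open>F_a\<close>.
\<close>

section \<open>Partial sums\<close>

definition psum :: "nat list \<Rightarrow> nat \<Rightarrow> nat" where
  "psum x i = sum_list (take i x)"

definition psum_set :: "nat list \<Rightarrow> nat set" where
  "psum_set x = range (psum x)"

lemma psum_0 [simp]: "psum x 0 = 0"
  by (simp add: psum_def)

lemma psum_Suc: "i < length x \<Longrightarrow> psum x (Suc i) = psum x i + x ! i"
  by (simp add: psum_def take_Suc_conv_app_nth)

lemma psum_Cons_Suc [simp]: "psum (y # ys) (Suc i) = y + psum ys i"
  by (simp add: psum_def)

lemma psum_eq_sum_list: "length x \<le> i \<Longrightarrow> psum x i = sum_list x"
  by (simp add: psum_def)

lemma psum_min_length: "psum x (min i (length x)) = psum x i"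
  by (simp add: psum_def min_def)

lemma psum_add: "psum x (j + k) = psum x j + psum (drop j x) k"
  by (simp add: psum_def take_add)

lemma psum_mono: "i \<le> j \<Longrightarrow> psum x i \<le> psum x j"
  using psum_add[of x i "j - i"] by simp

lemma list_eq_if_psum_eq:
  assumes "length x = length y" "\<And>i. psum x i = psum y i"
  shows "x = y"
proof (rule nth_equalityI)
  fix i assume "i < length x"
  then show "x ! i = y ! i" using psum_Suc[of i x] psum_Suc[of i y] assms by simp
qed fact

lemma psum_of_increments:
  assumes "mono T" "T 0 = 0" "\<And>i. T (min i n) = T i"
  shows "psum (map (\<lambda>i. T (Suc i) - T i) [0..<n]) i = T i"
proof -
  have telescope: "(\<Sum>k<m. T (Suc k) - T k) = T m" for m
  proof (induction m)
    case (Suc m)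
    then show ?case using monoD[OF assms(1), of m "Suc m"] by simp
  qed (simp add: assms(2))
  have "psum (map (\<lambda>i. T (Suc i) - T i) [0..<n]) i = (\<Sum>k<min i n. T (Suc k) - T k)"
    by (simp add: psum_def take_map min_def sum_list_sum_nth atLeast0LessThan)
  also have "\<dots> = T i" using telescope assms(3) by simp
  finally show ?thesis .
qed

lemma dominates_iff_psum: "dominates b a \<longleftrightarrow> (\<forall>i. psum a i \<le> psum b i)"
  by (simp add: dominates_def psum_def)

lemma psum_in_psum_set [simp]: "psum x i \<in> psum_set x"
  by (simp add: psum_set_def)

lemma zero_in_psum_set [simp]: "0 \<in> psum_set x"
  using psum_in_psum_set[of x 0] by simp

lemma psum_set_Nil: "psum_set [] = {0}"
  by (auto simp: psum_set_def psum_def)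

lemma finite_psum_set [simp]: "finite (psum_set x)"
proof -
  have "psum_set x \<subseteq> psum x ` {..length x}"
    unfolding psum_set_def by (metis image_eqI image_subsetI atMost_iff min.cobounded2 psum_min_length)
  then show ?thesis by (rule finite_subset) simp
qed

lemma exists_psum_round_down:
  assumes "finite P" "0 \<in> P"
  obtains b where "length b = length c" "\<And>i. psum b i = Max {p \<in> P. p \<le> psum c i}"
proof -
  define T where "T i = Max {p \<in> P. p \<le> psum c i}" for i
  have fin: "finite {p \<in> P. p \<le> psum c i}" for i using assms(1) by simp
  have ne: "{p \<in> P. p \<le> psum c i} \<noteq> {}" for i using assms(2) by auto
  have "mono T"
  proof (rule monoI)
    fix i j :: nat assume "i \<le> j"
    then have "{p \<in> P. p \<le> psum c i} \<subseteq> {p \<in> P. p \<le> psum c j}" using psum_mono[of i j c] by auto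
    then show "T i \<le> T j" unfolding T_def by (rule Max_mono[OF _ ne fin])
  qed
  moreover have "T 0 = 0" using Max_in[OF fin ne, of 0] unfolding T_def by simp
  moreover have "T (min i (length c)) = T i" for i unfolding T_def psum_min_length ..
  ultimately have "psum (map (\<lambda>i. T (Suc i) - T i) [0..<length c]) i = T i" for i
    by (rule psum_of_increments)
  then show ?thesis using that[of "map (\<lambda>i. T (Suc i) - T i) [0..<length c]"] T_def by simp
qed

lemma psum_set_Cons: "psum_set (y # ys) = insert 0 ((+) y ` psum_set ys)"
proof (rule set_eqI)
  fix v
  show "v \<in> psum_set (y # ys) \<longleftrightarrow> v \<in> insert 0 ((+) y ` psum_set ys)"
    unfolding psum_set_def
  proof
    assume "v \<in> range (psum (y # ys))"
    then obtain i where "v = psum (y # ys) i" by auto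
    then show "v \<in> insert 0 ((+) y ` range (psum ys))" by (cases i) auto
  next
    assume "v \<in> insert 0 ((+) y ` range (psum ys))"
    then show "v \<in> range (psum (y # ys))"
      by (auto intro: range_eqI[of _ _ 0] range_eqI[of _ _ "Suc _"])
  qed
qed

lemma psum_set_append: "(+) (sum_list xs) ` psum_set ys \<subseteq> psum_set (xs @ ys)"
proof
  fix v assume "v \<in> (+) (sum_list xs) ` psum_set ys"
  then obtain k where "v = sum_list xs + psum ys k" by (auto simp: psum_set_def)
  then have "v = psum (xs @ ys) (length xs + k)"
    using psum_add[of "xs @ ys" "length xs" k] by (simp add: psum_def)
  then show "v \<in> psum_set (xs @ ys)" by simp
qed

section \<open>Flattening and refinement\<close>

lemma sum_list_flat: "sum_list (flat x) = sum_list x"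
  by (induction x) (auto simp: flat_def)

lemma in_set_flat_pos: "v \<in> set (flat x) \<Longrightarrow> v > 0"
  by (auto simp: flat_def)

lemma psum_set_flat: "psum_set (flat x) = psum_set x"
proof (induction x)
  case (Cons y ys)
  then show ?case
    by (cases "y = 0") (simp_all add: flat_def psum_set_Cons insert_absorb)
qed (simp add: flat_def)

lemma pos_list_eq_if_psum_set_eq:
  assumes "\<forall>v\<in>set xs. v > 0" "\<forall>v\<in>set ys. v > 0" "psum_set xs = psum_set ys"
  shows "xs = ys"
  using assms
proof (induction xs arbitrary: ys)
  case Nil
  show ?case
  proof (cases ys)
    case (Cons y ys')
    have "y \<in> psum_set []" using Nil.prems(3) Cons psum_in_psum_set[of ys 1] by simp
    then show ?thesis using Nil.prems(2) Cons by (simp add: psum_set_Nil)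
  qed simp
next
  case (Cons x xs')
  obtain y ys' where ys: "ys = y # ys'"
  proof (cases ys)
    case Nil
    have "x \<in> psum_set (x # xs')" using psum_in_psum_set[of "x # xs'" 1] by simp
    then show ?thesis using Cons.prems(1,3) Nil by (simp add: psum_set_Nil)
  qed
  have pos: "x > 0" "y > 0" using Cons.prems(1,2) ys by auto
  have eq: "insert 0 ((+) x ` psum_set xs') = insert 0 ((+) y ` psum_set ys')"
    using Cons.prems(3) ys by (simp add: psum_set_Cons)
  \<comment> \<open>the first entry is the least nonzero partial sum\<close>
  have least: "z \<le> v" if "v \<in> insert 0 ((+) z ` S)" "v \<noteq> 0" for v z :: nat and S
    using that by auto
  have x_in: "x \<in> insert 0 ((+) x ` psum_set xs')" and y_in: "y \<in> insert 0 ((+) y ` psum_set ys')"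
    by (metis add_0_right imageI insertI2 zero_in_psum_set)+
  have "y \<le> x" using least[of x y "psum_set ys'"] x_in eq pos by simp
  moreover have "x \<le> y" using least[of y x "psum_set xs'"] y_in eq pos by simp
  ultimately have xy: "x = y" by simp
  have "(+) x ` psum_set xs' = insert 0 ((+) x ` psum_set xs') - {0}" using pos(1) by auto
  also have "\<dots> = insert 0 ((+) x ` psum_set ys') - {0}" using eq xy by simp
  also have "\<dots> = (+) x ` psum_set ys'" using pos(1) by auto
  finally have "(+) x ` psum_set xs' = (+) x ` psum_set ys'" .
  then have "psum_set xs' = psum_set ys'" by (simp add: inj_image_eq_iff)
  then have "xs' = ys'" using Cons.IH[of ys'] Cons.prems(1,2) ys by simp
  then show ?case using ys xy by simp
qed

lemma flat_eq_iff_psum_set_eq: "flat x = flat y \<longleftrightarrow> psum_set x = psum_set y"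
  using pos_list_eq_if_psum_set_eq[of "flat x" "flat y"] in_set_flat_pos by (metis psum_set_flat)

lemma refines_imp_psum_set_subset:
  assumes "refines ys xs"
  shows "sum_list ys = sum_list xs \<and> psum_set xs \<subseteq> psum_set ys"
proof -
  obtain ls where ls: "concat ls = ys" "map sum_list ls = xs"
    using assms unfolding refines_def by blast
  have "sum_list (concat ls) = sum_list (map sum_list ls) \<and>
        psum_set (map sum_list ls) \<subseteq> psum_set (concat ls)"
  proof (induction ls)
    case (Cons l ls)
    have "psum_set (map sum_list (l # ls)) = insert 0 ((+) (sum_list l) ` psum_set (map sum_list ls))"
      by (simp add: psum_set_Cons)
    also have "\<dots> \<subseteq> insert 0 ((+) (sum_list l) ` psum_set (concat ls))" using Cons by auto
    also have "\<dots> \<subseteq> psum_set (l @ concat ls)" using psum_set_append[of l "concat ls"] by simp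
    finally show ?case using Cons by simp
  qed simp
  then show ?thesis using ls by simp
qed

lemma refines_if_psum_set_subset:
  assumes "\<forall>v\<in>set xs. v > 0" "\<forall>v\<in>set ys. v > 0"
    and "sum_list ys = sum_list xs" "psum_set xs \<subseteq> psum_set ys"
  shows "refines ys xs"
  using assms
proof (induction xs arbitrary: ys)
  case Nil
  then have "ys = []" by (cases ys) auto
  then show ?case unfolding refines_def by (intro exI[of _ "[]"]) simp
next
  case (Cons x xs')
  have "x \<in> psum_set (x # xs')" using psum_in_psum_set[of "x # xs'" 1] by simp
  then obtain j where j: "psum ys j = x" using Cons.prems(4) by (auto simp: psum_set_def)
  let ?d = "drop j ys"
  have "refines ?d xs'"
  proof (rule Cons.IH)
    show "\<forall>v\<in>set xs'. 0 < v" using Cons.prems(1) by simp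
    show "\<forall>v\<in>set ?d. 0 < v" using Cons.prems(2) by (meson in_set_dropD)
    have "sum_list ys = psum ys j + sum_list ?d"
      by (metis append_take_drop_id psum_def sum_list_append)
    then show "sum_list ?d = sum_list xs'" using Cons.prems(3) j by simp
    show "psum_set xs' \<subseteq> psum_set ?d"
    proof
      fix v assume v: "v \<in> psum_set xs'"
      show "v \<in> psum_set ?d"
      proof (cases "v = 0")
        case False
        have "x + v \<in> psum_set (x # xs')" using v by (simp add: psum_set_Cons)
        then obtain k where k: "psum ys k = x + v" using Cons.prems(4) by (auto simp: psum_set_def)
        have "\<not> k \<le> j" using psum_mono[of k j ys] k j False by auto
        then have "psum ys k = psum ys j + psum ?d (k - j)"
          using psum_add[of ys j "k - j"] by simp
        then show ?thesis using j k by (metis add_left_imp_eq psum_in_psum_set)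
      qed simp
    qed
  qed
  then obtain ls where ls: "concat ls = ?d" "\<forall>l\<in>set ls. l \<noteq> []" "map sum_list ls = xs'"
    unfolding refines_def by blast
  have "take j ys \<noteq> []"
    using j Cons.prems(1) unfolding psum_def by (metis list.set_intros(1) sum_list.Nil less_irrefl)
  moreover have "sum_list (take j ys) = x" using j by (simp add: psum_def)
  ultimately show ?case unfolding refines_def using ls
    by (intro exI[of _ "take j ys # ls"]) simp
qed

lemma refines_flat_iff:
  "refines (flat c) (flat a) \<longleftrightarrow> sum_list c = sum_list a \<and> psum_set a \<subseteq> psum_set c"
  using refines_imp_psum_set_subset[of "flat c" "flat a"]
    refines_if_psum_set_subset[of "flat a" "flat c"] in_set_flat_pos
  by (auto simp: psum_set_flat sum_list_flat)

lemma fund_slide_set_iff: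
  "c \<in> fund_slide_set a \<longleftrightarrow> length c = length a \<and> (\<forall>i. psum a i \<le> psum c i) \<and>
     sum_list c = sum_list a \<and> psum_set a \<subseteq> psum_set c"
  by (auto simp: fund_slide_set_def dominates_iff_psum refines_flat_iff)

section \<open>Fixed slides\<close>

definition is_slide :: "nat list \<Rightarrow> nat list \<Rightarrow> bool" where
  "is_slide b c \<longleftrightarrow> length c = length b \<and> (\<forall>i. psum b i \<le> psum c i) \<and>
     (\<forall>i<length b. b ! i \<noteq> 0 \<longrightarrow> c ! i \<noteq> 0 \<and> psum c (Suc i) = psum b (Suc i)) \<and>
     sum_list c = sum_list b"

lemma psum_list_update_pair:
  assumes "Suc p < length c" "c ! p = 0" "i + j = c ! Suc p"
  shows "psum (c[p := i, Suc p := j]) k = (if k = Suc p then psum c k + i else psum c k)"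
proof -
  define u where "u = take p c"
  define w where "w = drop (Suc (Suc p)) c"
  have lu: "length u = p" using assms(1) by (simp add: u_def)
  have c: "c = u @ 0 # (i + j) # w"
    using assms unfolding u_def w_def by (metis Cons_nth_drop_Suc Suc_lessD append_take_drop_id)
  have c': "c[p := i, Suc p := j] = u @ i # j # w"
    using lu by (simp add: c list_update_append)
  have app: "psum (u @ v) k = psum u k + psum v (k - length u)" for v
    by (simp add: psum_def)
  have two: "psum (x # y # w) m =
      (if m = 0 then 0 else if m = 1 then x else x + y + psum w (m - 2))" for x y m
    by (cases m; cases "m - 1") (auto simp: psum_def)
  have "psum (c[p := i, Suc p := j]) k = psum u k + psum (i # j # w) (k - p)"
    by (simp add: c' app lu)
  moreover have "psum c k = psum u k + psum (0 # (i + j) # w) (k - p)"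
    using app[of "0 # (i + j) # w"] lu c by simp
  ultimately show ?thesis unfolding two by auto
qed

lemma is_slide_local_move:
  assumes "is_slide b c" "local_move b c c'"
  shows "is_slide b c'"
proof -
  obtain p i j where m: "Suc p < length c" "c ! p = 0" "i + j = c ! Suc p"
    "b ! Suc p \<noteq> 0 \<longrightarrow> j > 0" "c' = c[p := i, Suc p := j]"
    using assms(2) unfolding local_move_def by blast
  have ps: "psum c' k = (if k = Suc p then psum c k + i else psum c k)" for k
    using psum_list_update_pair[OF m(1-3)] m(5) by simp
  have len: "length c' = length c" "length c = length b"
    using m(5) assms(1) by (simp_all add: is_slide_def)
  have "psum b k \<le> psum c' k" for k
    using assms(1) ps[of k] unfolding is_slide_def by (metis trans_le_add1)
  moreover have "c' ! k \<noteq> 0 \<and> psum c' (Suc k) = psum b (Suc k)"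
    if "k < length b" "b ! k \<noteq> 0" for k
  proof -
    have "c ! k \<noteq> 0" "psum c (Suc k) = psum b (Suc k)"
      using assms(1) that unfolding is_slide_def by auto
    moreover from this have "k \<noteq> p" using m(2) by auto
    ultimately show ?thesis using ps[of "Suc k"] m(4,5) that len by (cases "k = Suc p") auto
  qed
  moreover have "sum_list c' = sum_list c"
    using ps[of "length c"] m(1) len psum_eq_sum_list[of c' "length c"]
      psum_eq_sum_list[of c "length c"] by simp
  ultimately show ?thesis using assms(1) len unfolding is_slide_def by simp
qed

lemma is_slide_if_fixed_slide: "(local_move b)\<^sup>*\<^sup>* b c \<Longrightarrow> is_slide b c"
proof (induction rule: rtranclp_induct)
  case base
  then show ?case by (simp add: is_slide_def)
next
  case (step c c')
  then show ?case using is_slide_local_move by blast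
qed

text \<open>
  Undoing a move: if \<open>c \<noteq> b\<close>, take the first position \<open>Suc p\<close> where the partial sums of
  \<open>c\<close> exceed those of \<open>b\<close>; then \<open>b ! p = 0 < c ! p\<close>, and sliding \<open>c ! p\<close> right into
  position \<open>Suc p\<close> gives a slide of \<open>b\<close> from which \<open>c\<close> is one local move away.
\<close>
lemma is_slide_local_move_back:
  assumes "is_slide b c" "c \<noteq> b"
  obtains c0 where "is_slide b c0" "local_move b c0 c"
    "(\<Sum>k\<le>length b. psum c0 k) < (\<Sum>k\<le>length b. psum c k)"
proof -
  have n: "length c = length b" "sum_list c = sum_list b" and ge: "\<And>k. psum b k \<le> psum c k"
    using assms(1) by (auto simp: is_slide_def)
  have "\<exists>k. psum c k \<noteq> psum b k" using assms(2) list_eq_if_psum_eq[of c b] n by auto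
  then obtain k where k: "psum c k \<noteq> psum b k" "\<And>k'. k' < k \<Longrightarrow> psum c k' = psum b k'"
    using exists_least_iff[of "\<lambda>k. psum c k \<noteq> psum b k"] by blast
  obtain p where kp: "k = Suc p" using k(1) by (cases k) auto
  have eqp: "psum c p = psum b p" using k(2) kp by simp
  have gt: "psum c (Suc p) > psum b (Suc p)" using k(1) ge[of k] kp by simp
  have pl: "Suc p < length c"
    using gt n psum_eq_sum_list[of c "Suc p"] psum_eq_sum_list[of b "Suc p"] by fastforce
  have cs: "psum c (Suc p) = psum c p + c ! p" using psum_Suc pl by simp
  have bs: "psum b (Suc p) = psum b p + b ! p" using psum_Suc pl n by simp
  have bp: "b ! p = 0"
    using assms(1) pl n gt unfolding is_slide_def by (metis Suc_lessD less_irrefl)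
  have cp: "c ! p > 0" using cs bs bp eqp gt by simp
  define c0 where "c0 = c[p := 0, Suc p := c ! p + c ! Suc p]"
  have l0: "length c0 = length c" by (simp add: c0_def)
  have c0p: "c0 ! p = 0" "c0 ! Suc p = c ! p + c ! Suc p" using pl by (auto simp: c0_def)
  have cc0: "c = c0[p := c ! p, Suc p := c ! Suc p]"
    by (simp add: c0_def list_update_swap)
  have ps: "psum c k = (if k = Suc p then psum c0 k + c ! p else psum c0 k)" for k
    using psum_list_update_pair[of p c0 "c ! p" "c ! Suc p" k] pl l0 c0p cc0 by simp
  have "local_move b c0 c"
    unfolding local_move_def
  proof (intro exI conjI)
    show "b ! Suc p \<noteq> 0 \<longrightarrow> 0 < c ! Suc p" using assms(1) pl n unfolding is_slide_def by auto
  qed (use pl l0 c0p cc0 in auto)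
  moreover have "is_slide b c0"
    unfolding is_slide_def
  proof (intro conjI allI impI)
    fix i
    show "psum b i \<le> psum c0 i" using ps[of i] ge[of i] cs eqp bs bp by (cases "i = Suc p") auto
  next
    fix i assume i: "i < length b" "b ! i \<noteq> 0"
    then have "c ! i \<noteq> 0" "psum c (Suc i) = psum b (Suc i)" "i \<noteq> p"
      using assms(1) bp unfolding is_slide_def by auto
    then show "c0 ! i \<noteq> 0" "psum c0 (Suc i) = psum b (Suc i)"
      using ps[of "Suc i"] cp i(1) n(1) by (cases "i = Suc p"; auto simp: c0_def nth_list_update)+
  next
    have "psum c0 (length c) = psum c (length c)" using ps[of "length c"] pl by auto
    then show "sum_list c0 = sum_list b"
      using psum_eq_sum_list[of c0 "length c"] psum_eq_sum_list[of c "length c"] l0 n by simp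
  qed (use l0 n in simp)
  moreover have "(\<Sum>k\<le>length b. psum c k) = (\<Sum>k\<le>length b. psum c0 k) + c ! p"
  proof -
    have "(\<Sum>k\<le>length b. psum c k) = (\<Sum>k\<le>length b. psum c0 k + (if k = Suc p then c ! p else 0))"
      by (rule sum.cong) (auto simp: ps)
    also have "\<dots> = (\<Sum>k\<le>length b. psum c0 k) + c ! p" using pl n by (simp add: sum.distrib)
    finally show ?thesis .
  qed
  ultimately show ?thesis using that cp by auto
qed

lemma fixed_slide_if_is_slide: "is_slide b c \<Longrightarrow> (local_move b)\<^sup>*\<^sup>* b c"
proof (induction "\<Sum>k\<le>length b. psum c k" arbitrary: c rule: less_induct)
  case less
  show ?case
  proof (cases "c = b")
    case False
    then obtain c0 where "is_slide b c0" "local_move b c0 c"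
      "(\<Sum>k\<le>length b. psum c0 k) < (\<Sum>k\<le>length b. psum c k)"
      using is_slide_local_move_back less.prems by blast
    then show ?thesis using less.hyps by (meson rtranclp.rtrancl_into_rtrancl)
  qed simp
qed

lemma fixed_slides_iff: "c \<in> fixed_slides b \<longleftrightarrow> is_slide b c"
  unfolding fixed_slides_def using is_slide_if_fixed_slide fixed_slide_if_is_slide by blast

section \<open>Slides of compositions with the same flattening\<close>

lemma psum_set_subset_if_is_slide:
  assumes "is_slide b c"
  shows "psum_set b \<subseteq> psum_set c"
proof -
  have "psum b i \<in> psum_set c" for i
  proof (induction i)
    case (Suc i)
    show ?case
    proof (cases "i < length b \<and> b ! i \<noteq> 0")
      case True
      then have "psum b (Suc i) = psum c (Suc i)" using assms unfolding is_slide_def by auto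
      then show ?thesis by simp
    next
      case False
      then have "psum b (Suc i) = psum b i" using psum_eq_sum_list psum_Suc by (cases "i < length b") auto
      then show ?thesis using Suc by simp
    qed
  qed simp
  then show ?thesis unfolding psum_set_def by blast
qed

lemma fund_slide_set_if_is_slide:
  assumes "length b = length a" "dominates b a" "flat b = flat a" "is_slide b c"
  shows "c \<in> fund_slide_set a"
proof -
  have "psum a i \<le> psum c i" for i
    using assms(2,4) unfolding dominates_iff_psum is_slide_def by (meson le_trans)
  moreover have "sum_list c = sum_list a"
    using assms(3,4) sum_list_flat[of a] sum_list_flat[of b] by (simp add: is_slide_def)
  moreover have "psum_set a \<subseteq> psum_set c"
    using assms(3) psum_set_subset_if_is_slide[OF assms(4)] by (simp add: flat_eq_iff_psum_set_eq)
  ultimately show ?thesis using assms(1,4) by (simp add: fund_slide_set_iff is_slide_def)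
qed

text \<open>
  If \<open>c\<close> slides \<open>b\<^sub>1\<close> and \<open>b\<^sub>2\<close> and every partial sum of \<open>b\<^sub>2\<close> is one of \<open>b\<^sub>1\<close>, a partial
  sum \<open>v\<close> of \<open>b\<^sub>2\<close> at \<open>i\<close> exceeding that of \<open>b\<^sub>1\<close> is reached by \<open>b\<^sub>1\<close> at some later position
  \<open>Suc k\<close> through a nonzero entry; there \<open>c\<close> has partial sum \<open>v\<close> but is below \<open>v\<close> at \<open>k \<ge> i\<close>,
  contradicting \<open>v \<le> psum c i\<close>.
\<close>
lemma is_slide_psum_le:
  assumes "psum_set b2 \<subseteq> psum_set b1" "is_slide b1 c" "is_slide b2 c"
  shows "psum b2 i \<le> psum b1 i"
proof (rule ccontr)
  assume "\<not> psum b2 i \<le> psum b1 i"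
  then have lt: "psum b1 i < psum b2 i" by simp
  define v where "v = psum b2 i"
  have "v \<in> psum_set b1" using assms(1) psum_in_psum_set[of b2 i] unfolding v_def by blast
  then have "\<exists>k. psum b1 k = v" by (auto simp: psum_set_def)
  then obtain k where k: "psum b1 k = v" "\<And>k'. k' < k \<Longrightarrow> psum b1 k' \<noteq> v"
    using exists_least_iff[of "\<lambda>k. psum b1 k = v"] by blast
  have ki: "i < k" using psum_mono[of k i b1] k lt v_def by (metis leD not_le_imp_less)
  then obtain k' where k': "k = Suc k'" by (cases k) auto
  have lk: "psum b1 k' < v" using k(2)[of k'] psum_mono[of k' k b1] k k' by fastforce
  have kl: "k' < length b1"
    using psum_eq_sum_list[of b1 k'] psum_eq_sum_list[of b1 k] k' k lk by fastforce
  have "b1 ! k' \<noteq> 0" using psum_Suc[OF kl] k k' lk by auto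
  then have "c ! k' \<noteq> 0" "psum c (Suc k') = v" "length c = length b1"
    using assms(2) kl k k' unfolding is_slide_def by auto
  then have "psum c k' < v" using psum_Suc[of k' c] kl by simp
  moreover have "psum c i \<le> psum c k'" using ki k' psum_mono by simp
  moreover have "v \<le> psum c i" using assms(3) v_def by (simp add: is_slide_def)
  ultimately show False by simp
qed

lemma is_slide_unique:
  assumes "flat b1 = flat b2" "is_slide b1 c" "is_slide b2 c"
  shows "b1 = b2"
proof (rule list_eq_if_psum_eq)
  show "length b1 = length b2" using assms(2,3) by (simp add: is_slide_def)
  have "psum_set b1 = psum_set b2" using assms(1) by (simp add: flat_eq_iff_psum_set_eq)
  then show "psum b1 i = psum b2 i" for i
    using is_slide_psum_le[OF _ assms(2,3)] is_slide_psum_le[OF _ assms(3,2)] by (simp add: le_antisym)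
qed

lemma exists_is_slide:
  assumes "c \<in> fund_slide_set a"
  obtains b where "length b = length a" "dominates b a" "flat b = flat a" "is_slide b c"
proof -
  have c: "length c = length a" "\<And>i. psum a i \<le> psum c i"
    "sum_list c = sum_list a" "psum_set a \<subseteq> psum_set c"
    using assms by (auto simp: fund_slide_set_iff)
  obtain b where lb: "length b = length c"
    and Sb: "\<And>i. psum b i = Max {p \<in> psum_set a. p \<le> psum c i}"
    using exists_psum_round_down[OF finite_psum_set zero_in_psum_set] by blast
  have fin: "finite {p \<in> psum_set a. p \<le> psum c i}" for i by simp
  have b_in: "psum b i \<in> psum_set a" "psum b i \<le> psum c i" for i
  proof -
    have "{p \<in> psum_set a. p \<le> psum c i} \<noteq> {}" using zero_in_psum_set[of a] by blast
    then show "psum b i \<in> psum_set a" "psum b i \<le> psum c i" using Max_in[OF fin] Sb by auto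
  qed
  have b_ge: "p \<in> psum_set a \<Longrightarrow> p \<le> psum c i \<Longrightarrow> p \<le> psum b i" for p i
    unfolding Sb by (rule Max_ge[OF fin]) simp
  have "psum_set b = psum_set a"
  proof
    show "psum_set b \<subseteq> psum_set a" using b_in by (auto simp: psum_set_def)
    show "psum_set a \<subseteq> psum_set b"
    proof
      fix p assume p: "p \<in> psum_set a"
      then obtain j where "p = psum c j" using c(4) by (auto simp: psum_set_def)
      then have "psum b j = p" using b_in(2)[of j] b_ge[OF p, of j] by simp
      then show "p \<in> psum_set b" by (metis psum_in_psum_set)
    qed
  qed
  then have "flat b = flat a" by (simp add: flat_eq_iff_psum_set_eq)
  moreover have "dominates b a" unfolding dominates_iff_psum using b_ge c(2) by simp
  moreover have "is_slide b c"
    unfolding is_slide_def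
  proof (intro conjI allI impI)
    show "length c = length b" using lb by simp
    show "psum b i \<le> psum c i" for i using b_in by simp
  next
    have "sum_list c \<in> psum_set a"
      using c(3) psum_in_psum_set[of a "length a"] by (simp add: psum_eq_sum_list)
    then have "psum b (length c) = sum_list c"
      using b_in(2)[of "length c"] b_ge[of "sum_list c" "length c"] by (simp add: psum_eq_sum_list)
    then show "sum_list c = sum_list b" using lb by (simp add: psum_eq_sum_list)
  next
    fix i assume i: "i < length b" "b ! i \<noteq> 0"
    then have lt: "psum b i < psum b (Suc i)" using psum_Suc by simp
    obtain j where j: "psum b (Suc i) = psum c j" using b_in(1) c(4) by (auto simp: psum_set_def)
    have above: "\<not> psum b (Suc i) \<le> psum c i" using b_ge[of "psum b (Suc i)" i] lt b_in(1) by fastforce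
    then have "i < j" using j psum_mono[of j i c] by (metis not_le_imp_less)
    then have eq: "psum c (Suc i) = psum b (Suc i)"
      using j psum_mono[of "Suc i" j c] b_in(2)[of "Suc i"] by simp
    show "c ! i \<noteq> 0" using psum_Suc[of i c] i(1) lb eq above by auto
    show "psum c (Suc i) = psum b (Suc i)" by (rule eq)
  qed
  moreover have "length b = length a" using lb c(1) by simp
  ultimately show ?thesis using that by blast
qed

lemma finite_same_flat: "finite {b. length b = n \<and> flat b = flat a}"
proof (rule finite_subset)
  show "{b. length b = n \<and> flat b = flat a} \<subseteq> {xs. set xs \<subseteq> {..sum_list a} \<and> length xs = n}"
  proof
    fix b assume b: "b \<in> {b. length b = n \<and> flat b = flat a}"
    then have "sum_list b = sum_list a" using sum_list_flat[of a] sum_list_flat[of b] by auto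
    then show "b \<in> {xs. set xs \<subseteq> {..sum_list a} \<and> length xs = n}"
      using b member_le_sum_list[of _ b] by auto
  qed
qed (rule finite_lists_length_eq, simp)

lemma card_slide_sources:
  "card {b. length b = length a \<and> dominates b a \<and> flat b = flat a \<and> is_slide b c} =
     (if c \<in> fund_slide_set a then 1 else 0)"
proof (cases "c \<in> fund_slide_set a")
  case True
  then obtain b where b: "length b = length a" "dominates b a" "flat b = flat a" "is_slide b c"
    using exists_is_slide by blast
  have "{b. length b = length a \<and> dominates b a \<and> flat b = flat a \<and> is_slide b c} = {b}"
    using b is_slide_unique by auto
  then show ?thesis using True by simp
next
  case False
  then have "{b. length b = length a \<and> dominates b a \<and> flat b = flat a \<and> is_slide b c} = {}"
    using fund_slide_set_if_is_slide by blast
  then show ?thesis using False by (simp only: card.empty if_False)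
qed

lemma sum_fun_apply: "finite A \<Longrightarrow> (\<Sum>b\<in>A. f b) x = (\<Sum>b\<in>A. f b x)"
  by (induction A rule: finite_induct) auto

theorem proposition4p7:
  fixes a :: "nat list" and n :: nat
  assumes "length a = n"
  shows "fund_slide a =
    (\<Sum>b \<in> {b. length b = n \<and> dominates b a \<and> flat b = flat a}. lock b)"
proof
  fix c
  define B where "B = {b. length b = n \<and> dominates b a \<and> flat b = flat a}"
  have "finite B"
    unfolding B_def by (rule finite_subset[OF _ finite_same_flat[of n a]]) blast
  then have "(\<Sum>b\<in>B. lock b) c = (\<Sum>b\<in>B. if is_slide b c then 1 else 0)"
    by (simp add: sum_fun_apply lock_def monomial_sum_def fixed_slides_iff)
  also have "\<dots> = of_nat (card {b \<in> B. is_slide b c})"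
    using \<open>finite B\<close> by (simp add: sum.If_cases Int_def)
  also have "\<dots> = fund_slide a c"
    using card_slide_sources[of a c] assms
    by (simp add: B_def fund_slide_def monomial_sum_def conj_assoc)
  finally show "fund_slide a c = (\<Sum>b\<in>B. lock b) c" ..
qed

end
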